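(* There is an absolute constant $c>0$ such that the following holds. Let $\delta>0$, let $q$ and $N$ be positive integers, and let $T$ be an $N$-vertex tournament that is $\delta$-far from transitive. Then any coloring of the edges of $T$ with $q$ colors contains a directed path with at least $c\delta^2N/q^3$ vertices whose edges receive at most three colors. Furthermore, there are distinct vertices $v_1,\dots,v_L$ with $L\geq c\delta^2N/q^3$ such that $v_j\to v_{j+1}$ for all $1\leq j<L$, $v_{j+2}\to v_j$ for all $1\leq j\leq L-2$, and the colors of the edges $v_jv_{j+1}$ and of the edges $v_jv_{j+2}$ are periodic in $j$ with period $3$ (i.e. the color of $v_jv_{j+1}$ equals that of $v_{j+3}v_{j+4}$ and the color of $v_jv_{j+2}$ equals that of $v_{j+3}v_{j+5}$ whenever these edges exist).
   Context: A tournament is an orientation of a complete graph. An $N$-vertex tournament is $\delta$-close to transitive if it can be made transitive (acyclic) by reversing the orientation of at most $\delta N^2$ edges, and $\delta$-far from transitive otherwise. A directed path is a sequence of distinct vertices $v_1,\dots,v_L$ with $v_j\to v_{j+1}$ for all $j<L$. *)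

theory Defs
  imports Main Complex_Main
begin

text \<open>A tournament on the finite vertex set V, given by its arc relation T
  (T x y means the edge between x and y is oriented x \<rightarrow> y).\<close>
definition tournament :: "'a set \<Rightarrow> ('a \<Rightarrow> 'a \<Rightarrow> bool) \<Rightarrow> bool" where
  "tournament V T \<longleftrightarrow> finite V \<and>
     (\<forall>x y. T x y \<longrightarrow> x \<in> V \<and> y \<in> V) \<and>
     (\<forall>x\<in>V. \<not> T x x) \<and>
     (\<forall>x\<in>V. \<forall>y\<in>V. x \<noteq> y \<longrightarrow> (T x y \<longleftrightarrow> \<not> T y x))"

definition arcs :: "'a set \<Rightarrow> ('a \<Rightarrow> 'a \<Rightarrow> bool) \<Rightarrow> ('a \<times> 'a) set" where
  "arcs V T = {(x, y). x \<in> V \<and> y \<in> V \<and> T x y}"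

definition reverse_arcs :: "('a \<Rightarrow> 'a \<Rightarrow> bool) \<Rightarrow> ('a \<times> 'a) set \<Rightarrow> 'a \<Rightarrow> 'a \<Rightarrow> bool" where
  "reverse_arcs T F x y \<longleftrightarrow> (T x y \<and> (x, y) \<notin> F) \<or> (T y x \<and> (y, x) \<in> F)"

definition delta_close_transitive :: "real \<Rightarrow> 'a set \<Rightarrow> ('a \<Rightarrow> 'a \<Rightarrow> bool) \<Rightarrow> bool" where
  "delta_close_transitive \<delta> V T \<longleftrightarrow>
     (\<exists>F. F \<subseteq> arcs V T \<and> real (card F) \<le> \<delta> * (real (card V))^2 \<and>
          acyclic (arcs V (reverse_arcs T F)))"

definition delta_far_transitive :: "real \<Rightarrow> 'a set \<Rightarrow> ('a \<Rightarrow> 'a \<Rightarrow> bool) \<Rightarrow> bool" where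
  "delta_far_transitive \<delta> V T \<longleftrightarrow> \<not> delta_close_transitive \<delta> V T"

definition directed_path :: "'a set \<Rightarrow> ('a \<Rightarrow> 'a \<Rightarrow> bool) \<Rightarrow> 'a list \<Rightarrow> bool" where
  "directed_path V T vs \<longleftrightarrow> distinct vs \<and> set vs \<subseteq> V \<and>
     (\<forall>j. j + 1 < length vs \<longrightarrow> T (vs ! j) (vs ! (j + 1)))"

end

(*
  Order the vertices by decreasing out-degree.  The backward arcs form a feedback arc set, so
  in a tournament that is delta-far from transitive there are b > delta N^2 of them.  Comparing
  the out-degree sequence with that of the transitive tournament, by summation by parts over
  the cuts of the order, gives 3 b^2 <= 16 N C for the number C of (ordered) cyclic triangles,
  hence C > 3 delta^2 N^3 / 16.

  By pigeonhole, a fraction q^-3 of these triangles carry one colour pattern (c0, c1, c2).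
  Tagging a triangle with the rotation of the pattern it realises makes the family closed
  under rotation.  Repeatedly deleting the triangles whose first edge has fewer than k
  extensions leaves a nonempty rotation-closed family in which every first edge has at least k
  extensions.  A greedy walk through it, rotating the last triangle and appending an unused
  vertex, builds v_1 ... v_k in which every v_j v_(j+1) v_(j+2) is a cyclic triangle carrying
  the pattern rotated by j: so v_(j+2) -> v_j and all colours are 3-periodic.
*)
theory Submission
  imports Defs
begin

lemma sum_by_parts:
  fixes x y :: "nat \<Rightarrow> 'a::comm_ring"
  shows "(\<Sum>i\<le>k. x i * y i) = (\<Sum>m<k. (\<Sum>i\<le>m. x i) * (y m - y (Suc m))) + (\<Sum>i\<le>k. x i) * y k"
  by (induction k) (simp_all add: algebra_simps)

lemma sum_squares_lessThan: "6 * (\<Sum>i<n. (int i)\<^sup>2) = (int n - 1) * int n * (2 * int n - 1)"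
  by (induction n) (auto simp: algebra_simps power2_eq_square)

lemma square_le_of_quadratic_lower_bounds:
  fixes W b :: int and n :: nat
  assumes "n > 0" and "b \<le> W" and "0 \<le> b"
    and lower: "\<And>L::nat. int L * b - int n * (int L)\<^sup>2 \<le> W"
  shows "b\<^sup>2 \<le> 8 * int n * W"
proof (cases "b < 2 * int n")
  case True
  have "b * b \<le> (2 * int n) * W"
    using True assms(1-3) by (intro mult_mono) auto
  also have "\<dots> \<le> 8 * int n * W"
    using assms(2,3) by (intro mult_right_mono) auto
  finally show ?thesis
    by (simp add: power2_eq_square)
next
  case False
  \<comment> \<open>take \<open>L = \<lfloor>b / 2n\<rfloor>\<close>, so that \<open>2 n L \<le> b < 4 n L\<close>\<close>
  define m where "m = 2 * int n"
  define L where "L = b div m"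
  have "m > 0"
    using \<open>n > 0\<close> by (simp add: m_def)
  then have "0 \<le> b mod m" and "b mod m < m"
    by simp_all
  moreover have "b = m * L + b mod m"
    unfolding L_def by simp
  ultimately have lower_L: "m * L \<le> b" and upper_L: "b < m * (L + 1)"
    by (simp_all add: distrib_left)
  have "L \<ge> 1"
  proof (rule ccontr)
    assume "\<not> L \<ge> 1"
    then have "m * (L + 1) \<le> m * 1"
      using \<open>m > 0\<close> by (intro mult_left_mono) auto
    then show False
      using False upper_L unfolding m_def by simp
  qed
  have "L * b - int n * L\<^sup>2 \<le> W"
    using lower[of "nat L"] \<open>L \<ge> 1\<close> by simp
  moreover have "m * L * L \<le> b * L"
    using lower_L \<open>L \<ge> 1\<close> by (intro mult_right_mono) auto
  ultimately have "L * b \<le> 2 * W"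
    unfolding m_def by (simp add: power2_eq_square algebra_simps)
  have "m * (L + 1) \<le> m * (2 * L)"
    using \<open>L \<ge> 1\<close> \<open>m > 0\<close> by (intro mult_left_mono) auto
  then have "b \<le> 4 * int n * L"
    using upper_L unfolding m_def by (simp add: algebra_simps)
  then have "b * b \<le> (4 * int n * L) * b"
    using \<open>0 \<le> b\<close> by (intro mult_right_mono)
  also have "\<dots> = 4 * int n * (L * b)"
    by simp
  also have "\<dots> \<le> 4 * int n * (2 * W)"
    using \<open>L * b \<le> 2 * W\<close> by (intro mult_left_mono) auto
  finally show ?thesis
    by (simp add: power2_eq_square)
qed

lemma sum_sum_antisym_eq_0:
  fixes g :: "'a \<Rightarrow> 'a \<Rightarrow> 'b::linordered_ab_group_add"
  assumes "\<And>i j. i \<in> I \<Longrightarrow> j \<in> I \<Longrightarrow> g j i = - g i j"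
  shows "(\<Sum>i\<in>I. \<Sum>j\<in>I. g i j) = 0"
proof -
  have "(\<Sum>i\<in>I. \<Sum>j\<in>I. g i j) = (\<Sum>j\<in>I. \<Sum>i\<in>I. g i j)"
    by (rule sum.swap)
  also have "\<dots> = (\<Sum>j\<in>I. \<Sum>i\<in>I. - g j i)"
    by (intro sum.cong refl) (metis assms)
  also have "\<dots> = - (\<Sum>j\<in>I. \<Sum>i\<in>I. g j i)"
    by (simp add: sum_negf)
  finally show ?thesis
    by simp
qed

lemma card_filter_eq_sum: "finite A \<Longrightarrow> card {x \<in> A. P x} = (\<Sum>x\<in>A. if P x then 1 else 0)"
  by (simp flip: sum.inter_filter)

lemma exists_large_fibre:
  assumes "finite C" and "finite K" and "K \<noteq> {}" and "f ` C \<subseteq> K"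
  shows "\<exists>k\<in>K. card C \<le> card K * card {x \<in> C. f x = k}"
proof (rule ccontr)
  assume "\<not> ?thesis"
  then have less: "\<And>k. k \<in> K \<Longrightarrow> card K * card {x \<in> C. f x = k} < card C"
    by (simp add: not_le)
  have "C = (\<Union>k\<in>K. {x \<in> C. f x = k})"
    using assms(4) by blast
  then have "card C \<le> (\<Sum>k\<in>K. card {x \<in> C. f x = k})"
    by (metis card_UN_le[OF assms(2)])
  then have "card K * card C \<le> (\<Sum>k\<in>K. card K * card {x \<in> C. f x = k})"
    by (simp add: sum_distrib_left[symmetric])
  also have "\<dots> < (\<Sum>k\<in>K. card C)"
    using assms(2,3) less by (intro sum_strict_mono) auto
  finally show False
    by simp
qed

lemma obtain_antimono_enumeration:
  fixes g :: "'a \<Rightarrow> 'b::linorder"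
  assumes "finite V"
  obtains \<pi> where "bij_betw \<pi> {..<card V} V"
    and "\<And>i j. i \<le> j \<Longrightarrow> j < card V \<Longrightarrow> g (\<pi> j) \<le> g (\<pi> i)"
proof -
  obtain ys where "distinct ys" "set ys = V"
    using finite_distinct_list[OF assms] by blast
  define xs where "xs = rev (sort_key g ys)"
  have "distinct xs" "set xs = V" "length xs = card V"
    using \<open>distinct ys\<close> \<open>set ys = V\<close> by (auto simp: xs_def distinct_card)
  show ?thesis
  proof
    show "bij_betw ((!) xs) {..<card V} V"
      using \<open>distinct xs\<close> \<open>set xs = V\<close> \<open>length xs = card V\<close> by (intro bij_betw_nth) auto
    have "sorted_wrt (\<ge>) (map g xs)"
      by (simp add: xs_def sorted_wrt_rev flip: rev_map)
    then show "g (xs ! j) \<le> g (xs ! i)" if "i \<le> j" "j < card V" for i j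
      using that \<open>length xs = card V\<close> sorted_wrt_nth_less[of "(\<ge>)" "map g xs" i j]
      by (cases "i = j") auto
  qed
qed

section \<open>Cyclic triangles in a tournament matrix\<close>

locale tournament_matrix =
  fixes n :: nat and A :: "nat \<Rightarrow> nat \<Rightarrow> int"
  assumes entry_cases: "i < n \<Longrightarrow> j < n \<Longrightarrow> A i j = 0 \<or> A i j = 1"
    and diag_eq_0: "i < n \<Longrightarrow> A i i = 0"
    and entry_add_transpose: "i < n \<Longrightarrow> j < n \<Longrightarrow> i \<noteq> j \<Longrightarrow> A i j + A j i = 1"
begin

definition outdeg :: "nat \<Rightarrow> int" where
  "outdeg i = (\<Sum>l<n. A i l)"

definition cyclic_count :: int where
  "cyclic_count = (\<Sum>i<n. \<Sum>j<n. \<Sum>l<n. A i j * A j l * A l i)"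

definition transitive_count :: int where
  "transitive_count = (\<Sum>i<n. \<Sum>j<n. \<Sum>l<n. A i j * A j l * A i l)"

definition backward_count :: int where
  "backward_count = (\<Sum>i<n. \<Sum>j<n. if i < j then A j i else 0)"

definition crossing :: "nat \<Rightarrow> int" where
  "crossing m = (\<Sum>i<n. \<Sum>j<n. if i \<le> m \<and> m < j then A j i else 0)"

lemma entry_nonneg: "i < n \<Longrightarrow> j < n \<Longrightarrow> 0 \<le> A i j"
  using entry_cases by fastforce

lemma entry_le_1: "i < n \<Longrightarrow> j < n \<Longrightarrow> A i j \<le> 1"
  using entry_cases by fastforce

lemma entry_mult_self: "i < n \<Longrightarrow> j < n \<Longrightarrow> A i j * A i j = A i j"
  using entry_cases by fastforce

lemma transpose_entry: "i < n \<Longrightarrow> j < n \<Longrightarrow> A j i = 1 - of_bool (i = j) - A i j"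
  using entry_add_transpose[of i j] diag_eq_0[of i] by (cases "i = j") auto

lemma entry_mult_transpose: "i < n \<Longrightarrow> j < n \<Longrightarrow> A i j * A j i = 0"
  using transpose_entry[of i j] entry_cases[of i j] by auto

lemma indeg_eq:
  assumes "i < n"
  shows "(\<Sum>j<n. A j i) = int n - 1 - outdeg i"
proof -
  have "(\<Sum>j<n. A j i) = (\<Sum>j<n. 1 - of_bool (i = j) - A i j)"
    by (intro sum.cong refl) (simp add: transpose_entry[OF assms])
  then show ?thesis
    using assms by (simp add: sum_subtractf outdeg_def)
qed

lemma sum_outdeg: "2 * (\<Sum>i<n. outdeg i) = int n * (int n - 1)"
proof -
  have "(\<Sum>i<n. outdeg i) = (\<Sum>j<n. \<Sum>i<n. A i j)"
    unfolding outdeg_def by (rule sum.swap)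
  also have "\<dots> = (\<Sum>j<n. int n - 1 - outdeg j)"
    by (simp add: indeg_eq)
  also have "\<dots> = int n * (int n - 1) - (\<Sum>i<n. outdeg i)"
    by (simp only: sum_subtractf sum_constant card_lessThan) (simp add: algebra_simps)
  finally show ?thesis
    by simp
qed

lemma two_path_count_by_middle:
  "(\<Sum>i<n. \<Sum>j<n. \<Sum>l<n. A i j * A j l) = (\<Sum>j<n. (int n - 1 - outdeg j) * outdeg j)"
proof -
  have "(\<Sum>i<n. \<Sum>j<n. \<Sum>l<n. A i j * A j l) = (\<Sum>j<n. (\<Sum>i<n. A i j) * (\<Sum>l<n. A j l))"
    by (subst sum.swap) (simp add: sum_product)
  then show ?thesis
    by (simp add: indeg_eq outdeg_def)
qed

lemma two_path_count_split:
  "(\<Sum>i<n. \<Sum>j<n. \<Sum>l<n. A i j * A j l) = cyclic_count + transitive_count"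
proof -
  have "A i j * A j l = A i j * A j l * A l i + A i j * A j l * A i l"
    if "i < n" "j < n" "l < n" for i j l
  proof (cases "l = i")
    case True
    then show ?thesis
      using entry_mult_transpose[of i j] diag_eq_0 that by simp
  next
    case False
    then show ?thesis
      using entry_add_transpose[of l i] that by (simp flip: distrib_left)
  qed
  then show ?thesis
    by (simp add: cyclic_count_def transitive_count_def flip: sum.distrib)
qed

lemma transitive_count_eq: "2 * transitive_count = (\<Sum>i<n. outdeg i * outdeg i - outdeg i)"
proof -
  \<comment> \<open>a transitive triangle is determined by its source and an ordered pair of its out-neighbours\<close>
  have out_pairs: "(\<Sum>j<n. \<Sum>l<n. A i j * A i l * (A j l + A l j)) = outdeg i * outdeg i - outdeg i"
    if "i < n" for i
  proof -
    have "(\<Sum>j<n. \<Sum>l<n. A i j * A i l * (A j l + A l j))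
        = (\<Sum>j<n. \<Sum>l<n. A i j * A i l - (if l = j then A i j else 0))"
    proof (intro sum.cong refl)
      fix j l
      assume "j \<in> {..<n}" "l \<in> {..<n}"
      then show "A i j * A i l * (A j l + A l j) = A i j * A i l - (if l = j then A i j else 0)"
        using that entry_add_transpose[of j l] diag_eq_0[of j] entry_mult_self[of i j]
        by (cases "l = j") auto
    qed
    also have "\<dots> = outdeg i * outdeg i - outdeg i"
      by (simp add: outdeg_def sum_subtractf sum_product)
    finally show ?thesis .
  qed
  have "(\<Sum>i<n. \<Sum>j<n. \<Sum>l<n. A i j * A i l * A l j) = (\<Sum>i<n. \<Sum>l<n. \<Sum>j<n. A i j * A i l * A l j)"
    by (rule sum.cong[OF refl], rule sum.swap)
  also have "\<dots> = transitive_count"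
    unfolding transitive_count_def by (simp only: mult_ac)
  finally have "2 * transitive_count
      = (\<Sum>i<n. \<Sum>j<n. \<Sum>l<n. A i j * A i l * A j l) + (\<Sum>i<n. \<Sum>j<n. \<Sum>l<n. A i j * A i l * A l j)"
    unfolding transitive_count_def by (simp only: mult_ac)
  also have "\<dots> = (\<Sum>i<n. \<Sum>j<n. \<Sum>l<n. A i j * A i l * (A j l + A l j))"
    by (simp only: distrib_left sum.distrib)
  also have "\<dots> = (\<Sum>i<n. outdeg i * outdeg i - outdeg i)"
    by (rule sum.cong) (simp_all add: out_pairs)
  finally show ?thesis .
qed

text \<open>\<open>n - Suc i\<close> is the out-degree of \<open>i\<close> in the transitive tournament
  \<open>i \<rightarrow> j \<longleftrightarrow> i < j\<close>.\<close>

lemma cyclic_count_eq: "2 * cyclic_count = 3 * (\<Sum>i<n. (int (n - Suc i))\<^sup>2 - (outdeg i)\<^sup>2)"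
proof -
  define S where "S = (\<Sum>i<n. outdeg i)"
  define Q where "Q = (\<Sum>i<n. (outdeg i)\<^sup>2)"
  define P where "P = (\<Sum>i<n. (int (n - Suc i))\<^sup>2)"
  have "P = (\<Sum>i<n. (int i)\<^sup>2)"
    unfolding P_def by (rule sum.nat_diff_reindex)
  then have "6 * P = (2 * int n - 1) * (int n * (int n - 1))"
    by (simp add: sum_squares_lessThan)
  also have "\<dots> = (2 * int n - 1) * (2 * S)"
    by (simp add: sum_outdeg S_def)
  finally have P_eq: "3 * P = (2 * int n - 1) * S"
    by simp
  have "(\<Sum>j<n. (int n - 1 - outdeg j) * outdeg j) = (int n - 1) * S - Q"
    by (simp add: S_def Q_def sum_subtractf sum_distrib_left left_diff_distrib power2_eq_square)
  moreover have "2 * transitive_count = Q - S"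
    using transitive_count_eq by (simp add: S_def Q_def sum_subtractf power2_eq_square)
  moreover have "(2 * int n - 1) * S = 2 * ((int n - 1) * S) + S"
    by (simp add: algebra_simps)
  ultimately have "2 * cyclic_count = (2 * int n - 1) * S - 3 * Q"
    using two_path_count_by_middle two_path_count_split by linarith
  moreover have "(\<Sum>i<n. (int (n - Suc i))\<^sup>2 - (outdeg i)\<^sup>2) = P - Q"
    by (simp only: P_def Q_def sum_subtractf)
  ultimately show ?thesis
    using P_eq by linarith
qed


lemma outdeg_deficit_eq:
  assumes "i < n"
  shows "int (n - Suc i) - outdeg i = (\<Sum>j<n. if i < j then A j i else if j < i then - A i j else 0)"
proof -
  have "int (n - Suc i) = (\<Sum>j<n. if i < j then 1 else 0)"
  proof -
    have "{..<n} \<inter> {j. i < j} = {i<..<n}"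
      by auto
    then show ?thesis
      by (simp add: sum.If_cases)
  qed
  moreover have "(\<Sum>j<n. (if i < j then 1 else 0) - A i j)
      = (\<Sum>j<n. if i < j then A j i else if j < i then - A i j else 0)"
  proof (intro sum.cong refl)
    fix j
    assume "j \<in> {..<n}"
    then show "(if i < j then 1 else 0) - A i j = (if i < j then A j i else if j < i then - A i j else 0)"
      using assms entry_add_transpose[of i j] diag_eq_0[of i] by (cases i j rule: linorder_cases) auto
  qed
  ultimately show ?thesis
    by (simp add: outdeg_def sum_subtractf)
qed

text \<open>Summed over the prefix \<open>{..m}\<close>, the arcs inside the prefix cancel and only the backward
  arcs entering it from beyond \<open>m\<close> remain.\<close>

lemma sum_deficit_eq_crossing:
  assumes "m < n"
  shows "(\<Sum>i\<le>m. int (n - Suc i) - outdeg i) = crossing m"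
proof -
  define f where "f i j = (if i < j then A j i else if j < i then - A i j else 0)" for i j
  define g where "g i j = (if i \<le> m \<and> j \<le> m then f i j else 0)" for i j
  have "int (n - Suc i) - outdeg i = (\<Sum>j<n. f i j)" if "i \<le> m" for i
    unfolding f_def using that assms by (intro outdeg_deficit_eq) simp
  then have "(\<Sum>i\<le>m. int (n - Suc i) - outdeg i) = (\<Sum>i\<le>m. \<Sum>j<n. f i j)"
    by (intro sum.cong refl) simp
  also have "\<dots> = (\<Sum>i<n. if i \<le> m then \<Sum>j<n. f i j else 0)"
  proof -
    have "{..m} = {i \<in> {..<n}. i \<le> m}"
      using assms by auto
    then show ?thesis
      by (simp only: sum.inter_filter[OF finite_lessThan])
  qed
  also have "\<dots> = (\<Sum>i<n. \<Sum>j<n. g i j + (if i \<le> m \<and> m < j then A j i else 0))"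
  proof (intro sum.cong refl)
    fix i
    show "(if i \<le> m then \<Sum>j<n. f i j else 0) = (\<Sum>j<n. g i j + (if i \<le> m \<and> m < j then A j i else 0))"
    proof (cases "i \<le> m")
      case True
      have "f i j = g i j + (if i \<le> m \<and> m < j then A j i else 0)" for j
        using True by (simp add: f_def g_def)
      then show ?thesis
        using True by simp
    qed (simp add: g_def)
  qed
  also have "\<dots> = (\<Sum>i<n. \<Sum>j<n. g i j) + crossing m"
    by (simp add: sum.distrib crossing_def)
  also have "(\<Sum>i<n. \<Sum>j<n. g i j) = 0"
    by (rule sum_sum_antisym_eq_0) (auto simp: g_def f_def)
  finally show ?thesis
    by simp
qed

lemma sum_crossing_eq:
  "(\<Sum>m<n. crossing m) = (\<Sum>i<n. \<Sum>j<n. if i < j then A j i * (int j - int i) else 0)"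
proof -
  have "(\<Sum>m<n. crossing m) = (\<Sum>i<n. \<Sum>j<n. \<Sum>m<n. if i \<le> m \<and> m < j then A j i else 0)"
    unfolding crossing_def by (subst sum.swap) (intro sum.cong refl sum.swap)
  also have "\<dots> = (\<Sum>i<n. \<Sum>j<n. if i < j then A j i * (int j - int i) else 0)"
  proof (intro sum.cong refl)
    fix i j
    assume "j \<in> {..<n}"
    then have "{m \<in> {..<n}. i \<le> m \<and> m < j} = {i..<j}"
      by auto
    then have "(\<Sum>m<n. if i \<le> m \<and> m < j then A j i else 0) = A j i * int (card {i..<j})"
      by (simp flip: sum.inter_filter)
    then show "(\<Sum>m<n. if i \<le> m \<and> m < j then A j i else 0) = (if i < j then A j i * (int j - int i) else 0)"
      by simp
  qed
  finally show ?thesis .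
qed

lemma backward_count_le_sum_crossing: "backward_count \<le> (\<Sum>m<n. crossing m)"
  unfolding sum_crossing_eq backward_count_def
proof (intro sum_mono)
  fix i j
  assume "i \<in> {..<n}" "j \<in> {..<n}"
  then show "(if i < j then A j i else 0) \<le> (if i < j then A j i * (int j - int i) else 0)"
    using mult_left_mono[of 1 "int j - int i" "A j i"] entry_nonneg[of j i] by auto
qed

text \<open>A backward arc of length at least \<open>L\<close> crosses at least \<open>L\<close> cuts, and fewer than \<open>n L\<close> pairs
  are closer than \<open>L\<close>.\<close>

lemma sum_crossing_lower_bound: "int L * backward_count - int n * (int L)\<^sup>2 \<le> (\<Sum>m<n. crossing m)"
proof -
  define short where "short i j = (if i < j \<and> j < i + L then 1 else 0 :: int)" for i j
  have "int L * backward_count - int L * (\<Sum>i<n. \<Sum>j<n. short i j)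
      = (\<Sum>i<n. \<Sum>j<n. int L * (if i < j then A j i else 0) - int L * short i j)"
    by (simp add: backward_count_def sum_distrib_left sum_subtractf)
  also have "\<dots> \<le> (\<Sum>m<n. crossing m)"
    unfolding sum_crossing_eq
  proof (intro sum_mono)
    fix i j
    assume "i \<in> {..<n}" "j \<in> {..<n}"
    then have "0 \<le> A j i" "A j i \<le> 1"
      by (simp_all add: entry_nonneg entry_le_1)
    then have le_L: "int L * A j i \<le> int L" and nonneg: "i < j \<Longrightarrow> 0 \<le> A j i * (int j - int i)"
      and long: "int L \<le> int j - int i \<Longrightarrow> int L * A j i \<le> A j i * (int j - int i)"
      using mult_left_mono[of "A j i" 1 "int L"] mult_right_mono[of "int L" "int j - int i" "A j i"]
      by (simp_all add: mult.commute)
    consider "\<not> i < j" | "i < j" "j < i + L" | "i < j" "int L \<le> int j - int i"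
      by linarith
    then show "int L * (if i < j then A j i else 0) - int L * short i j
        \<le> (if i < j then A j i * (int j - int i) else 0)"
    proof cases
      case 1
      then show ?thesis
        by (simp add: short_def)
    next
      case 2
      then have "short i j = 1"
        by (simp add: short_def)
      show ?thesis
        using le_L nonneg[OF 2(1)]
        by (simp only: if_P[OF 2(1)] \<open>short i j = 1\<close> mult_1_right)
    next
      case 3
      then have "short i j = 0"
        by (simp add: short_def)
      with 3 long show ?thesis
        by simp
    qed
  qed
  finally have "int L * backward_count - int L * (\<Sum>i<n. \<Sum>j<n. short i j) \<le> (\<Sum>m<n. crossing m)" .
  moreover have "(\<Sum>j<n. short i j) \<le> int L" for i
  proof -
    have "(\<Sum>j<n. short i j) = int (card {j \<in> {..<n}. i < j \<and> j < i + L})"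
      by (simp add: short_def flip: sum.inter_filter)
    also have "card {j \<in> {..<n}. i < j \<and> j < i + L} \<le> card {i<..<i + L}"
      by (rule card_mono) auto
    finally show ?thesis
      by simp
  qed
  then have "(\<Sum>i<n. \<Sum>j<n. short i j) \<le> (\<Sum>i<n. int L)"
    by (intro sum_mono)
  then have "int L * (\<Sum>i<n. \<Sum>j<n. short i j) \<le> int L * (int n * int L)"
    by (intro mult_left_mono) auto
  ultimately show ?thesis
    by (simp add: power2_eq_square algebra_simps)
qed

text \<open>Summation by parts: the prefix sums of the deficits are the crossings, and the weights
  \<open>n - Suc i + outdeg i\<close> drop by at least one at each step when the out-degrees decrease.\<close>

lemma sum_crossing_le_deficit:
  assumes outdeg_antimono: "\<And>i j. i \<le> j \<Longrightarrow> j < n \<Longrightarrow> outdeg j \<le> outdeg i"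
  shows "(\<Sum>m<n. crossing m) \<le> (\<Sum>i<n. (int (n - Suc i))\<^sup>2 - (outdeg i)\<^sup>2)"
proof (cases n)
  case 0
  then show ?thesis
    by simp
next
  case (Suc k)
  define x where "x i = int (n - Suc i) - outdeg i" for i
  define y where "y i = int (n - Suc i) + outdeg i" for i
  have "{..<n} = {..k}"
    using Suc by auto
  have "crossing k = 0"
    unfolding crossing_def using Suc by (intro sum.neutral) auto
  have "(\<Sum>i<n. (int (n - Suc i))\<^sup>2 - (outdeg i)\<^sup>2) = (\<Sum>i\<le>k. x i * y i)"
    unfolding x_def y_def \<open>{..<n} = {..k}\<close> by (simp add: power2_eq_square algebra_simps)
  also have "\<dots> = (\<Sum>m<k. crossing m * (y m - y (Suc m)))"
    using sum_by_parts[of x y k] sum_deficit_eq_crossing \<open>crossing k = 0\<close> Suc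
    by (simp add: x_def)
  also have "\<dots> \<ge> (\<Sum>m<k. crossing m)"
  proof (intro sum_mono)
    fix m
    assume "m \<in> {..<k}"
    then have "y m - y (Suc m) \<ge> 1"
      using outdeg_antimono[of m "Suc m"] Suc unfolding y_def by simp
    moreover have "crossing m \<ge> 0"
      unfolding crossing_def by (intro sum_nonneg) (simp add: entry_nonneg)
    ultimately show "crossing m \<le> crossing m * (y m - y (Suc m))"
      using mult_left_mono[of 1 "y m - y (Suc m)" "crossing m"] by simp
  qed
  finally show ?thesis
    using \<open>crossing k = 0\<close> Suc by simp
qed

theorem backward_count_squared_le:
  assumes "\<And>i j. i \<le> j \<Longrightarrow> j < n \<Longrightarrow> outdeg j \<le> outdeg i"
  shows "3 * backward_count\<^sup>2 \<le> 16 * int n * cyclic_count"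
proof (cases "n = 0")
  case True
  then show ?thesis
    unfolding backward_count_def by simp
next
  case False
  have "0 \<le> backward_count"
    unfolding backward_count_def by (intro sum_nonneg) (simp add: entry_nonneg)
  then have "backward_count\<^sup>2 \<le> 8 * int n * (\<Sum>m<n. crossing m)"
    using False backward_count_le_sum_crossing sum_crossing_lower_bound
    by (intro square_le_of_quadratic_lower_bounds) auto
  also have "\<dots> \<le> 8 * int n * (\<Sum>i<n. (int (n - Suc i))\<^sup>2 - (outdeg i)\<^sup>2)"
    using sum_crossing_le_deficit[OF assms] by (intro mult_left_mono) auto
  finally have "3 * backward_count\<^sup>2 \<le> 8 * int n * (3 * (\<Sum>i<n. (int (n - Suc i))\<^sup>2 - (outdeg i)\<^sup>2))"
    by linarith
  also have "\<dots> = 16 * int n * cyclic_count"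
    by (simp only: flip: cyclic_count_eq)
  finally show ?thesis .
qed

end

section \<open>Feedback arc sets from the out-degree order\<close>

definition cyclic_triangles :: "'a set \<Rightarrow> ('a \<Rightarrow> 'a \<Rightarrow> bool) \<Rightarrow> ('a \<times> 'a \<times> 'a) set" where
  "cyclic_triangles V T = {(x, y, z). x \<in> V \<and> y \<in> V \<and> z \<in> V \<and> T x y \<and> T y z \<and> T z x}"

lemma finite_cyclic_triangles: "finite V \<Longrightarrow> finite (cyclic_triangles V T)"
  by (rule finite_subset[of _ "V \<times> V \<times> V"]) (auto simp: cyclic_triangles_def)

lemma card_cyclic_triangles_eq_sum:
  assumes "finite V"
  shows "card (cyclic_triangles V T)
    = (\<Sum>x\<in>V. \<Sum>y\<in>V. \<Sum>z\<in>V. if T x y \<and> T y z \<and> T z x then 1 else 0)"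
proof -
  have "cyclic_triangles V T = Sigma V (\<lambda>x. Sigma V (\<lambda>y. {z \<in> V. T x y \<and> T y z \<and> T z x}))"
    by (auto simp: cyclic_triangles_def)
  then show ?thesis
    using assms by (simp add: card_SigmaI flip: sum.inter_filter)
qed

lemma acyclic_reverse_backward_arcs:
  fixes pos :: "'a \<Rightarrow> nat"
  assumes "tournament V T" and "inj_on pos V"
  shows "acyclic (arcs V (reverse_arcs T {(x, y) \<in> arcs V T. pos y < pos x}))"
proof (rule acyclic_subset)
  show "acyclic (inv_image less_than pos)"
    by (intro wf_acyclic wf_inv_image wf_less_than)
  show "arcs V (reverse_arcs T {(x, y) \<in> arcs V T. pos y < pos x}) \<subseteq> inv_image less_than pos"
  proof clarify
    fix x y
    assume "(x, y) \<in> arcs V (reverse_arcs T {(x, y) \<in> arcs V T. pos y < pos x})"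
    then have "x \<in> V" "y \<in> V" and "(T x y \<and> \<not> pos y < pos x) \<or> pos x < pos y"
      by (auto simp: arcs_def reverse_arcs_def)
    moreover have "T x y \<Longrightarrow> x \<noteq> y"
      using assms(1) \<open>x \<in> V\<close> unfolding tournament_def by blast
    then have "T x y \<Longrightarrow> pos x \<noteq> pos y"
      using inj_onD[OF assms(2)] \<open>x \<in> V\<close> \<open>y \<in> V\<close> by blast
    ultimately show "(x, y) \<in> inv_image less_than pos"
      by auto
  qed
qed

lemma tournament_finite: "tournament V T \<Longrightarrow> finite V"
  unfolding tournament_def by blast

lemma tournament_arc_in: "tournament V T \<Longrightarrow> T x y \<Longrightarrow> x \<in> V \<and> y \<in> V"
  unfolding tournament_def by blast

lemma tournament_irrefl: "tournament V T \<Longrightarrow> \<not> T x x"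
  unfolding tournament_def by blast

lemma tournament_asym_iff:
  "tournament V T \<Longrightarrow> x \<in> V \<Longrightarrow> y \<in> V \<Longrightarrow> x \<noteq> y \<Longrightarrow> T x y \<longleftrightarrow> \<not> T y x"
  unfolding tournament_def by blast

lemma card_backward_arcs_eq_sum:
  fixes n :: nat
  shows "card {(x, y) \<in> arcs {..<n} T. y < x} = (\<Sum>i<n. \<Sum>j<n. if i < j \<and> T j i then 1 else 0)"
proof -
  have "card {(x, y) \<in> arcs {..<n} T. y < x} = card (Sigma {..<n} (\<lambda>j. {i \<in> {..<n}. i < j \<and> T j i}))"
    by (rule arg_cong[where f = card]) (auto simp: arcs_def)
  also have "\<dots> = (\<Sum>j<n. card {i \<in> {..<n}. i < j \<and> T j i})"
    by (rule card_SigmaI) auto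
  also have "\<dots> = (\<Sum>j<n. \<Sum>i<n. if i < j \<and> T j i then 1 else 0)"
    by (intro sum.cong refl card_filter_eq_sum finite_lessThan)
  also have "\<dots> = (\<Sum>i<n. \<Sum>j<n. if i < j \<and> T j i then 1 else 0)"
    by (rule sum.swap)
  finally show ?thesis .
qed

lemma backward_arcs_bound_if_outdeg_antimono:
  assumes tour: "tournament {..<n} T"
    and antimono: "\<And>i j. i \<le> j \<Longrightarrow> j < n \<Longrightarrow> card {l. T j l} \<le> card {l. T i l}"
  shows "3 * (card {(x, y) \<in> arcs {..<n} T. y < x})\<^sup>2 \<le> 16 * n * card (cyclic_triangles {..<n} T)"
proof -
  define A where "A i j = (if T i j then 1 else 0 :: int)" for i j
  interpret tournament_matrix n A
  proof
    show "A i j = 0 \<or> A i j = 1" "A i i = 0" for i j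
      using tournament_irrefl[OF tour] by (simp_all add: A_def)
    show "i < n \<Longrightarrow> j < n \<Longrightarrow> i \<noteq> j \<Longrightarrow> A i j + A j i = 1" for i j
      using tournament_asym_iff[OF tour, of i j] by (auto simp: A_def)
  qed
  have "outdeg i = int (card {l. T i l})" for i
  proof -
    have "{l. T i l} = {l \<in> {..<n}. T i l}"
      using tournament_arc_in[OF tour] by auto
    then show ?thesis
      by (simp add: outdeg_def A_def flip: sum.inter_filter)
  qed
  then have "3 * backward_count\<^sup>2 \<le> 16 * int n * cyclic_count"
    using antimono by (intro backward_count_squared_le) simp
  moreover have "backward_count = int (card {(x, y) \<in> arcs {..<n} T. y < x})"
    unfolding card_backward_arcs_eq_sum backward_count_def A_def of_nat_sum
    by (intro sum.cong refl) simp
  moreover have "cyclic_count = int (card (cyclic_triangles {..<n} T))"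
    unfolding card_cyclic_triangles_eq_sum[OF finite_lessThan] cyclic_count_def A_def of_nat_sum
    by (intro sum.cong refl) simp
  ultimately have "int (3 * (card {(x, y) \<in> arcs {..<n} T. y < x})\<^sup>2)
      \<le> int (16 * n * card (cyclic_triangles {..<n} T))"
    by simp
  then show ?thesis
    by (simp only: of_nat_le_iff)
qed

lemma tournament_reindex:
  fixes \<pi> :: "nat \<Rightarrow> 'a"
  assumes tour: "tournament V T" and bij: "bij_betw \<pi> {..<n} V"
  shows "tournament {..<n} (\<lambda>i j. i < n \<and> j < n \<and> T (\<pi> i) (\<pi> j))"
  unfolding tournament_def
proof (intro conjI ballI allI impI)
  fix i j
  assume "i \<in> {..<n}" "j \<in> {..<n}" "i \<noteq> j"
  then have "\<pi> i \<in> V" "\<pi> j \<in> V" "\<pi> i \<noteq> \<pi> j"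
    using bij by (auto simp: bij_betw_def inj_on_def)
  then show "(i < n \<and> j < n \<and> T (\<pi> i) (\<pi> j)) \<longleftrightarrow> \<not> (j < n \<and> i < n \<and> T (\<pi> j) (\<pi> i))"
    using tournament_asym_iff[OF tour, of "\<pi> i" "\<pi> j"] \<open>i \<in> {..<n}\<close> \<open>j \<in> {..<n}\<close> by auto
qed (use tournament_irrefl[OF tour] in auto)

lemma card_cyclic_triangles_reindex:
  fixes \<pi> :: "nat \<Rightarrow> 'a"
  assumes "bij_betw \<pi> {..<n} V"
  shows "card (cyclic_triangles {..<n} (\<lambda>i j. i < n \<and> j < n \<and> T (\<pi> i) (\<pi> j)))
    = card (cyclic_triangles V T)"
proof -
  obtain pos where pos: "\<And>x. x \<in> V \<Longrightarrow> pos x < n \<and> \<pi> (pos x) = x"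
    and \<pi>: "\<And>i. i < n \<Longrightarrow> \<pi> i \<in> V \<and> pos (\<pi> i) = i"
    using assms unfolding bij_betw_iff_bijections by auto
  define S where "S = (\<lambda>i j. i < n \<and> j < n \<and> T (\<pi> i) (\<pi> j))"
  have "cyclic_triangles V T = (\<lambda>(i, j, l). (\<pi> i, \<pi> j, \<pi> l)) ` cyclic_triangles {..<n} S"
  proof (intro equalityI subsetI)
    fix t
    assume "t \<in> cyclic_triangles V T"
    then obtain x y z where "t = (x, y, z)" "x \<in> V" "y \<in> V" "z \<in> V" "T x y" "T y z" "T z x"
      by (auto simp: cyclic_triangles_def)
    then show "t \<in> (\<lambda>(i, j, l). (\<pi> i, \<pi> j, \<pi> l)) ` cyclic_triangles {..<n} S"
      using pos[of x] pos[of y] pos[of z]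
      by (intro image_eqI[of _ _ "(pos x, pos y, pos z)"]) (auto simp: cyclic_triangles_def S_def)
  qed (auto simp: cyclic_triangles_def S_def \<pi>)
  moreover have "inj_on (\<lambda>(i, j, l). (\<pi> i, \<pi> j, \<pi> l)) (cyclic_triangles {..<n} S)"
    by (rule inj_on_inverseI[where g = "\<lambda>(x, y, z). (pos x, pos y, pos z)"])
      (auto simp: cyclic_triangles_def \<pi>)
  ultimately have "card (cyclic_triangles V T) = card (cyclic_triangles {..<n} S)"
    by (simp only: card_image)
  then show ?thesis
    unfolding S_def by simp
qed

lemma card_backward_arcs_reindex:
  fixes \<pi> :: "nat \<Rightarrow> 'a"
  assumes \<pi>_pos: "\<And>x. x \<in> V \<Longrightarrow> pos x < n \<and> \<pi> (pos x) = x"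
    and pos_\<pi>: "\<And>i. i < n \<Longrightarrow> \<pi> i \<in> V \<and> pos (\<pi> i) = i"
  shows "card {(x, y) \<in> arcs V T. pos y < pos x}
    = card {(i, j) \<in> arcs {..<n} (\<lambda>i j. i < n \<and> j < n \<and> T (\<pi> i) (\<pi> j)). j < i}"
proof -
  define S where "S = (\<lambda>i j. i < n \<and> j < n \<and> T (\<pi> i) (\<pi> j))"
  have "{(x, y) \<in> arcs V T. pos y < pos x} = (\<lambda>(i, j). (\<pi> i, \<pi> j)) ` {(i, j) \<in> arcs {..<n} S. j < i}"
  proof (intro equalityI subsetI)
    fix e
    assume "e \<in> {(x, y) \<in> arcs V T. pos y < pos x}"
    then obtain x y where "e = (x, y)" "x \<in> V" "y \<in> V" "T x y" "pos y < pos x"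
      by (auto simp: arcs_def)
    then show "e \<in> (\<lambda>(i, j). (\<pi> i, \<pi> j)) ` {(i, j) \<in> arcs {..<n} S. j < i}"
      using \<pi>_pos[of x] \<pi>_pos[of y]
      by (intro image_eqI[of _ _ "(pos x, pos y)"]) (auto simp: arcs_def S_def)
  next
    fix e
    assume "e \<in> (\<lambda>(i, j). (\<pi> i, \<pi> j)) ` {(i, j) \<in> arcs {..<n} S. j < i}"
    then obtain i j where "e = (\<pi> i, \<pi> j)" "i < n" "j < n" "T (\<pi> i) (\<pi> j)" "j < i"
      by (auto simp: arcs_def S_def)
    then show "e \<in> {(x, y) \<in> arcs V T. pos y < pos x}"
      using pos_\<pi> by (auto simp: arcs_def)
  qed
  moreover have "inj_on (\<lambda>(i, j). (\<pi> i, \<pi> j)) {(i, j) \<in> arcs {..<n} S. j < i}"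
    by (rule inj_on_inverseI[where g = "\<lambda>(x, y). (pos x, pos y)"]) (auto simp: arcs_def pos_\<pi>)
  ultimately show ?thesis
    unfolding S_def by (simp add: card_image)
qed

lemma card_out_neighbours_reindex:
  fixes \<pi> :: "nat \<Rightarrow> 'a"
  assumes tour: "tournament V T" and "bij_betw \<pi> {..<n} V" and "j < n"
  shows "card {l. j < n \<and> l < n \<and> T (\<pi> j) (\<pi> l)} = card {w. T (\<pi> j) w}"
proof -
  have "{w. T (\<pi> j) w} = \<pi> ` {l. l < n \<and> T (\<pi> j) (\<pi> l)}"
    using tournament_arc_in[OF tour] bij_betw_imp_surj_on[OF assms(2)] by fastforce
  moreover have "inj_on \<pi> {l. l < n \<and> T (\<pi> j) (\<pi> l)}"
    using bij_betw_imp_inj_on[OF assms(2)] by (rule inj_on_subset) auto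
  ultimately show ?thesis
    using \<open>j < n\<close> by (simp add: card_image)
qed

theorem tournament_feedback_arc_set_bound:
  assumes tour: "tournament V T"
  obtains F where "F \<subseteq> arcs V T" and "acyclic (arcs V (reverse_arcs T F))"
    and "3 * (card F)\<^sup>2 \<le> 16 * card V * card (cyclic_triangles V T)"
proof -
  define n where "n = card V"
  obtain \<pi> where bij: "bij_betw \<pi> {..<n} V"
    and antimono: "\<And>i j. i \<le> j \<Longrightarrow> j < n \<Longrightarrow> card {w. T (\<pi> j) w} \<le> card {w. T (\<pi> i) w}"
    using obtain_antimono_enumeration[OF tournament_finite[OF tour], of "\<lambda>v. card {w. T v w}"]
    unfolding n_def by blast
  obtain pos where \<pi>_pos: "\<And>x. x \<in> V \<Longrightarrow> pos x < n \<and> \<pi> (pos x) = x"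
    and pos_\<pi>: "\<And>i. i < n \<Longrightarrow> \<pi> i \<in> V \<and> pos (\<pi> i) = i"
    using bij unfolding bij_betw_iff_bijections by auto
  define F where "F = {(x, y) \<in> arcs V T. pos y < pos x}"
  let ?S = "\<lambda>i j. i < n \<and> j < n \<and> T (\<pi> i) (\<pi> j)"
  have card_F: "card F = card {(i, j) \<in> arcs {..<n} ?S. j < i}"
    unfolding F_def using \<pi>_pos pos_\<pi> by (rule card_backward_arcs_reindex)
  have "3 * (card F)\<^sup>2 \<le> 16 * n * card (cyclic_triangles {..<n} ?S)"
    unfolding card_F using antimono tournament_reindex[OF tour bij] card_out_neighbours_reindex[OF tour bij]
    by (intro backward_arcs_bound_if_outdeg_antimono) simp_all
  also have "card (cyclic_triangles {..<n} ?S) = card (cyclic_triangles V T)"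
    by (rule card_cyclic_triangles_reindex[OF bij])
  finally have "3 * (card F)\<^sup>2 \<le> 16 * card V * card (cyclic_triangles V T)"
    by (simp only: n_def)
  moreover have "inj_on pos V"
    by (rule inj_on_inverseI[where g = \<pi>]) (use \<pi>_pos in blast)
  then have "acyclic (arcs V (reverse_arcs T F))"
    unfolding F_def using tour by (rule acyclic_reverse_backward_arcs[rotated])
  moreover have "F \<subseteq> arcs V T"
    by (auto simp: F_def)
  ultimately show ?thesis
    using that by blast
qed

lemma far_from_transitive_many_cyclic_triangles:
  assumes tour: "tournament V T" and far: "delta_far_transitive \<delta> V T"
    and "0 < \<delta>" and "0 < card V"
  shows "3 * \<delta>\<^sup>2 * real (card V) ^ 3 < 16 * real (card (cyclic_triangles V T))"
proof -
  obtain F where "F \<subseteq> arcs V T" "acyclic (arcs V (reverse_arcs T F))"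
    and bound: "3 * (card F)\<^sup>2 \<le> 16 * card V * card (cyclic_triangles V T)"
    using tournament_feedback_arc_set_bound[OF tour] by blast
  then have "\<delta> * real (card V) ^ 2 < real (card F)"
    using far unfolding delta_far_transitive_def delta_close_transitive_def by (meson not_le)
  moreover have "0 \<le> \<delta> * real (card V) ^ 2"
    using \<open>0 < \<delta>\<close> by simp
  ultimately have "(\<delta> * real (card V) ^ 2) ^ 2 < real (card F) ^ 2"
    by (rule power_strict_mono) simp
  moreover have "real (3 * (card F)\<^sup>2) \<le> real (16 * card V * card (cyclic_triangles V T))"
    using bound by (simp only: of_nat_le_iff)
  moreover have "real (card V) * (3 * \<delta>\<^sup>2 * real (card V) ^ 3) = 3 * (\<delta> * real (card V) ^ 2) ^ 2"
    by (simp add: power2_eq_square power3_eq_cube)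
  ultimately have "real (card V) * (3 * \<delta>\<^sup>2 * real (card V) ^ 3)
      < real (card V) * (16 * real (card (cyclic_triangles V T)))"
    by simp
  then show ?thesis
    using \<open>0 < card V\<close> by simp
qed

section \<open>Rotation-closed families of triangles\<close>

fun rotate_triangle :: "'a \<times> 'a \<times> 'a \<times> nat \<Rightarrow> 'a \<times> 'a \<times> 'a \<times> nat" where
  "rotate_triangle (x, y, z, p) = (y, z, x, Suc p mod 3)"

fun phase :: "'a \<times> 'a \<times> 'a \<times> nat \<Rightarrow> nat" where
  "phase (x, y, z, p) = p"

fun front :: "'a \<times> 'a \<times> 'a \<times> nat \<Rightarrow> 'a \<times> 'a \<times> nat" where
  "front (x, y, z, p) = (x, y, p)"

definition link :: "('a \<times> 'a \<times> 'a \<times> nat) set \<Rightarrow> 'a \<Rightarrow> 'a \<Rightarrow> nat \<Rightarrow> 'a set" where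
  "link G x y p = {z. (x, y, z, p) \<in> G}"

definition rotations :: "('a \<times> 'a \<times> 'a \<times> nat) set \<Rightarrow> ('a \<times> 'a \<times> 'a \<times> nat) set" where
  "rotations R = R \<union> rotate_triangle ` R \<union> rotate_triangle ` rotate_triangle ` R"

lemma phase_rotate_triangle: "phase (rotate_triangle t) < 3"
  by (cases t) simp

lemma rotate_triangle_triple:
  assumes "phase t < 3"
  shows "rotate_triangle (rotate_triangle (rotate_triangle t)) = t"
proof -
  obtain x y z p where t: "t = (x, y, z, p)"
    by (cases t)
  then have "p = 0 \<or> p = 1 \<or> p = 2"
    using assms by auto
  then show ?thesis
    using t by auto
qed

lemma card_rotations_le:
  assumes "finite R"
  shows "card (rotations R) \<le> 3 * card R"
proof -
  have "card (rotations R) \<le> card R + card (rotate_triangle ` R) + card (rotate_triangle ` rotate_triangle ` R)"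
    unfolding rotations_def by (intro order.trans[OF card_Un_le] add_mono card_Un_le order.refl)
  also have "\<dots> \<le> card R + card R + card R"
    using assms by (intro add_mono card_image_le order.trans[OF card_image_le] order.refl) auto
  finally show ?thesis
    by simp
qed

lemma mem_rotations_if_rotate:
  assumes "phase t < 3" and "\<forall>r\<in>R. phase r < 3" and "rotate_triangle t \<in> rotations R"
  shows "t \<in> rotations R"
proof -
  have t: "rotate_triangle (rotate_triangle (rotate_triangle t)) = t"
    using assms(1) by (rule rotate_triangle_triple)
  from assms(3) consider r where "r \<in> R" "rotate_triangle t = r"
    | r where "r \<in> R" "rotate_triangle t = rotate_triangle r"
    | r where "r \<in> R" "rotate_triangle t = rotate_triangle (rotate_triangle r)"
    unfolding rotations_def by blast
  then show ?thesis
  proof cases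
    case 1
    have "t = rotate_triangle (rotate_triangle r)"
      using t 1(2) by metis
    then show ?thesis
      using 1(1) unfolding rotations_def by blast
  next
    case 2
    have "t = rotate_triangle (rotate_triangle (rotate_triangle r))"
      using t 2(2) by metis
    also have "\<dots> = r"
      using assms(2) 2(1) by (simp add: rotate_triangle_triple)
    finally show ?thesis
      using 2(1) unfolding rotations_def by blast
  next
    case 3
    have "t = rotate_triangle (rotate_triangle (rotate_triangle (rotate_triangle r)))"
      using t 3(2) by metis
    also have "\<dots> = rotate_triangle r"
      using assms(2) 3(1) by (simp add: rotate_triangle_triple)
    finally show ?thesis
      using 3(1) unfolding rotations_def by blast
  qed
qed

lemma delete_rotations_of_small_link:
  assumes fin: "finite Q" and rot: "\<forall>t\<in>Q. rotate_triangle t \<in> Q" and ph: "\<forall>t\<in>Q. phase t < 3"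
    and t: "(x, y, z, p) \<in> Q" and small: "card (link Q x y p) < k"
    and R: "R = rotations {t \<in> Q. front t = (x, y, p)}"
  shows "\<forall>t\<in>Q - R. rotate_triangle t \<in> Q - R"
    and "card (Q - R) < card Q"
    and "card Q < card (Q - R) + 3 * k"
    and "card (front ` (Q - R)) < card (front ` Q)"
proof -
  define R0 where "R0 = {t \<in> Q. front t = (x, y, p)}"
  have "R0 \<subseteq> Q"
    by (auto simp: R0_def)
  then have "R \<subseteq> Q"
    using rot unfolding R R0_def[symmetric] rotations_def by blast
  have "R0 = (\<lambda>z. (x, y, z, p)) ` link Q x y p"
  proof (intro equalityI subsetI)
    fix t
    assume "t \<in> R0"
    then show "t \<in> (\<lambda>z. (x, y, z, p)) ` link Q x y p"
      unfolding R0_def by (cases t) (auto simp: link_def)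
  qed (auto simp: link_def R0_def)
  moreover have "finite (link Q x y p)"
    by (rule finite_subset[OF _ finite_imageI[OF fin, of "\<lambda>(x, y, z, p). z"]]) (force simp: link_def)
  ultimately have "card R0 < k"
    using small card_image_le[of "link Q x y p" "\<lambda>z. (x, y, z, p)"] by simp
  then have "card R < 3 * k"
    unfolding R R0_def[symmetric] using fin \<open>R0 \<subseteq> Q\<close>
    by (intro order.strict_trans1[OF card_rotations_le]) (auto intro: finite_subset)
  moreover have "card (Q - R) = card Q - card R"
    using \<open>R \<subseteq> Q\<close> fin by (intro card_Diff_subset) (auto intro: finite_subset)
  moreover have "card R \<le> card Q"
    using \<open>R \<subseteq> Q\<close> fin by (rule card_mono[rotated])
  ultimately show "card Q < card (Q - R) + 3 * k"
    by linarith
  have "(x, y, z, p) \<in> R"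
    using t unfolding R rotations_def by simp
  then show "card (Q - R) < card Q"
    using t fin by (intro psubset_card_mono) auto
  show "\<forall>t\<in>Q - R. rotate_triangle t \<in> Q - R"
  proof
    fix t
    assume "t \<in> Q - R"
    moreover have "\<forall>r\<in>R0. phase r < 3"
      using ph \<open>R0 \<subseteq> Q\<close> by blast
    ultimately have "rotate_triangle t \<notin> R"
      using ph mem_rotations_if_rotate[of t R0] unfolding R R0_def[symmetric] by blast
    then show "rotate_triangle t \<in> Q - R"
      using rot \<open>t \<in> Q - R\<close> by blast
  qed
  have "front ` (Q - R) \<subseteq> front ` Q - {(x, y, p)}"
    unfolding R rotations_def by auto
  moreover have "(x, y, p) \<in> front ` Q"
    using t by force
  ultimately have "front ` (Q - R) \<subset> front ` Q"
    by blast
  then show "card (front ` (Q - R)) < card (front ` Q)"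
    using fin by (intro psubset_card_mono) auto
qed

text \<open>Deleting the rotations of all triangles with a small link removes fewer than \<open>3 k\<close>
  triangles per deleted front, so the deletion stops before the family is exhausted.\<close>

lemma rotation_closed_subset_with_large_links:
  assumes "finite Q" and "\<forall>t\<in>Q. rotate_triangle t \<in> Q" and "\<forall>t\<in>Q. phase t < 3"
    and "3 * k * card (front ` Q) < card Q"
  shows "\<exists>G\<subseteq>Q. G \<noteq> {} \<and> (\<forall>t\<in>G. rotate_triangle t \<in> G)
    \<and> (\<forall>(x, y, z, p)\<in>G. k \<le> card (link G x y p))"
  using assms
proof (induction "card Q" arbitrary: Q rule: less_induct)
  case less
  show ?case
  proof (cases "\<forall>(x, y, z, p)\<in>Q. k \<le> card (link Q x y p)")
    case True
    then show ?thesis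
      using less.prems by auto
  next
    case False
    then obtain x y z p where "(x, y, z, p) \<in> Q" and "card (link Q x y p) < k"
      by (auto simp: not_le)
    define R where "R = rotations {t \<in> Q. front t = (x, y, p)}"
    note delete = delete_rotations_of_small_link[OF less.prems(1-3) \<open>(x, y, z, p) \<in> Q\<close>
        \<open>card (link Q x y p) < k\<close> R_def]
    have "3 * k * card (front ` (Q - R)) + 3 * k \<le> 3 * k * card (front ` Q)"
      using delete(4) by (metis Suc_leI mult_Suc_right mult_le_mono2 add.commute)
    then have "3 * k * card (front ` (Q - R)) < card (Q - R)"
      using less.prems(4) delete(3) by linarith
    then obtain G where "G \<subseteq> Q - R" "G \<noteq> {}" "\<forall>t\<in>G. rotate_triangle t \<in> G"
      "\<forall>(x, y, z, p)\<in>G. k \<le> card (link G x y p)"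
      using less.hyps[OF delete(2)] less.prems(1,3) delete(1) by auto
    then show ?thesis
      by blast
  qed
qed

definition phased_walk :: "('a \<times> 'a \<times> 'a \<times> nat) set \<Rightarrow> 'a list \<Rightarrow> nat \<Rightarrow> bool" where
  "phased_walk G vs p0 \<longleftrightarrow>
     (\<forall>j. j + 2 < length vs \<longrightarrow> (vs ! j, vs ! (j + 1), vs ! (j + 2), (p0 + j) mod 3) \<in> G)"

lemma phased_walk_mono: "phased_walk G vs p0 \<Longrightarrow> G \<subseteq> H \<Longrightarrow> phased_walk H vs p0"
  unfolding phased_walk_def by blast

lemma phased_walk_snoc:
  assumes walk: "phased_walk G vs p0" and len: "length vs = m + 3"
    and last: "(vs ! (m + 1), vs ! (m + 2), w, (p0 + Suc m) mod 3) \<in> G"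
  shows "phased_walk G (vs @ [w]) p0"
  unfolding phased_walk_def
proof (intro allI impI)
  fix j
  assume "j + 2 < length (vs @ [w])"
  then consider "j + 2 < length vs" | "j = Suc m"
    using len by fastforce
  then show "((vs @ [w]) ! j, (vs @ [w]) ! (j + 1), (vs @ [w]) ! (j + 2), (p0 + j) mod 3) \<in> G"
  proof cases
    case 1
    then show ?thesis
      using walk by (simp add: phased_walk_def nth_append)
  next
    case 2
    then show ?thesis
      using last len by (simp add: nth_append)
  qed
qed

text \<open>Greedy extension: the rotated last window has at least \<open>k\<close> completions, and fewer than \<open>k\<close>
  vertices are used so far.\<close>

lemma long_phased_walk_if_large_links:
  assumes "G \<noteq> {}" and rot: "\<forall>t\<in>G. rotate_triangle t \<in> G"
    and links: "\<forall>(x, y, z, p)\<in>G. k \<le> card (link G x y p)"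
    and dist: "\<forall>(x, y, z, p)\<in>G. distinct [x, y, z]"
    and "3 \<le> k"
  shows "\<exists>vs p0. length vs = k \<and> distinct vs \<and> phased_walk G vs p0"
proof -
  have "\<exists>vs p0. length vs = m + 3 \<and> distinct vs \<and> phased_walk G vs p0" if "m + 3 \<le> k" for m
    using that
  proof (induction m)
    case 0
    obtain t where "t \<in> G"
      using \<open>G \<noteq> {}\<close> by blast
    then obtain x y z p where t: "(x, y, z, p) \<in> G" and "p < 3"
      using rot phase_rotate_triangle[of t] by (metis phase.simps prod_cases4)
    then have "phased_walk G [x, y, z] p"
      by (simp add: phased_walk_def)
    then show ?case
      using t dist by (intro exI[of _ "[x, y, z]"]) fastforce
  next
    case (Suc m)
    then obtain vs p0 where len: "length vs = m + 3" and "distinct vs" and walk: "phased_walk G vs p0"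
      by auto
    have "(vs ! m, vs ! (m + 1), vs ! (m + 2), (p0 + m) mod 3) \<in> G"
      using walk len by (simp add: phased_walk_def)
    then have "(vs ! (m + 1), vs ! (m + 2), vs ! m, (p0 + Suc m) mod 3) \<in> G"
      using rot by (force simp: mod_Suc_eq)
    then have "k \<le> card (link G (vs ! (m + 1)) (vs ! (m + 2)) ((p0 + Suc m) mod 3))"
      using links by fastforce
    then have "card (set vs) < card (link G (vs ! (m + 1)) (vs ! (m + 2)) ((p0 + Suc m) mod 3))"
      using Suc.prems len distinct_card[OF \<open>distinct vs\<close>] by simp
    then obtain w where "w \<in> link G (vs ! (m + 1)) (vs ! (m + 2)) ((p0 + Suc m) mod 3)" and "w \<notin> set vs"
      by (metis card_mono finite_set not_le subsetI)
    then have "phased_walk G (vs @ [w]) p0" and "distinct (vs @ [w])"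
      using phased_walk_snoc[OF walk len] \<open>distinct vs\<close> by (auto simp: link_def)
    then show ?case
      using len by (intro exI[of _ "vs @ [w]"]) auto
  qed
  from this[of "k - 3"] show ?thesis
    using \<open>3 \<le> k\<close> by simp
qed

section \<open>Colour patterns and periodic paths\<close>

text \<open>A triangle \<open>(x, y, z, p)\<close> is read with its colour pattern rotated by the phase \<open>p\<close>, so
  that rotating the triangle advances the phase.\<close>

definition phased_triangles ::
  "'a set \<Rightarrow> ('a \<Rightarrow> 'a \<Rightarrow> bool) \<Rightarrow> ('a \<Rightarrow> 'a \<Rightarrow> 'c) \<Rightarrow> 'c list \<Rightarrow> ('a \<times> 'a \<times> 'a \<times> nat) set" where
  "phased_triangles V T col c = {(x, y, z, p). (x, y, z) \<in> cyclic_triangles V T \<and> p < 3 \<and>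
     col x y = c ! p \<and> col y z = c ! ((p + 1) mod 3) \<and> col z x = c ! ((p + 2) mod 3)}"

lemma finite_phased_triangles: "finite V \<Longrightarrow> finite (phased_triangles V T col c)"
  by (rule finite_subset[of _ "V \<times> V \<times> V \<times> {..<3}"])
    (auto simp: phased_triangles_def cyclic_triangles_def)

lemma phase_phased_triangles: "t \<in> phased_triangles V T col c \<Longrightarrow> phase t < 3"
  by (auto simp: phased_triangles_def)

lemma rotate_phased_triangles:
  assumes "t \<in> phased_triangles V T col c"
  shows "rotate_triangle t \<in> phased_triangles V T col c"
proof -
  obtain x y z p where t: "t = (x, y, z, p)"
    by (cases t)
  then have "p = 0 \<or> p = 1 \<or> p = 2"
    using assms by (auto simp: phased_triangles_def)
  then show ?thesis
    using assms unfolding t by (auto simp: phased_triangles_def cyclic_triangles_def numeral_2_eq_2)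
qed

lemma card_front_phased_triangles_le:
  assumes "finite V"
  shows "card (front ` phased_triangles V T col c) \<le> 3 * (card V)\<^sup>2"
proof -
  have "front ` phased_triangles V T col c \<subseteq> V \<times> V \<times> {..<3}"
    by (auto simp: phased_triangles_def cyclic_triangles_def)
  then have "card (front ` phased_triangles V T col c) \<le> card (V \<times> V \<times> {..<3::nat})"
    using assms by (intro card_mono) auto
  then show ?thesis
    by (simp add: card_cartesian_product power2_eq_square)
qed

lemma distinct_phased_triangles:
  "tournament V T \<Longrightarrow> (x, y, z, p) \<in> phased_triangles V T col c \<Longrightarrow> distinct [x, y, z]"
  using tournament_irrefl[of V T] by (auto simp: phased_triangles_def cyclic_triangles_def)

lemma exists_colour_pattern:
  assumes "finite V" and "0 < q" and col: "\<forall>x y. T x y \<longrightarrow> col x y < q"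
  obtains c where "card (cyclic_triangles V T) \<le> q ^ 3 * card (phased_triangles V T col c)"
proof -
  define K where "K = {c. set c \<subseteq> {..<q} \<and> length c = 3}"
  define pattern where "pattern = (\<lambda>(x, y, z). [col x y, col y z, col z x])"
  have "card K = q ^ 3"
    unfolding K_def using card_lists_length_eq[of "{..<q}" 3] by simp
  moreover have "K \<noteq> {}"
    using \<open>0 < q\<close> unfolding K_def by (intro exI[of _ "[0, 0, 0]"] ex_in_conv[THEN iffD1]) auto
  moreover have "pattern ` cyclic_triangles V T \<subseteq> K"
    using col by (auto simp: K_def pattern_def cyclic_triangles_def)
  ultimately obtain c where c: "card (cyclic_triangles V T) \<le> q ^ 3 * card {t \<in> cyclic_triangles V T. pattern t = c}"
    using exists_large_fibre[of "cyclic_triangles V T" K pattern] finite_cyclic_triangles[OF assms(1)]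
      finite_lists_length_eq[of "{..<q}" 3] unfolding K_def by auto
  have "card {t \<in> cyclic_triangles V T. pattern t = c} \<le> card (phased_triangles V T col c)"
  proof (rule card_inj_on_le)
    show "inj_on (\<lambda>(x, y, z). (x, y, z, 0::nat)) {t \<in> cyclic_triangles V T. pattern t = c}"
      by (auto simp: inj_on_def)
    show "(\<lambda>(x, y, z). (x, y, z, 0::nat)) ` {t \<in> cyclic_triangles V T. pattern t = c}
        \<subseteq> phased_triangles V T col c"
      by (auto simp: pattern_def phased_triangles_def)
    show "finite (phased_triangles V T col c)"
      using assms(1) by (rule finite_phased_triangles)
  qed
  then show ?thesis
    using that c mult_le_mono2 order.trans by blast
qed

lemma phased_walk_in_phased_triangles:
  assumes walk: "phased_walk (phased_triangles V T col c) vs p0" and "3 \<le> length vs"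
  shows "set vs \<subseteq> V"
    and "j + 1 < length vs \<Longrightarrow> T (vs ! j) (vs ! (j + 1)) \<and> col (vs ! j) (vs ! (j + 1)) = c ! ((p0 + j) mod 3)"
    and "j + 2 < length vs \<Longrightarrow> T (vs ! (j + 2)) (vs ! j) \<and> col (vs ! (j + 2)) (vs ! j) = c ! ((p0 + j + 2) mod 3)"
proof -
  have window: "vs ! i \<in> V \<and> vs ! (i + 1) \<in> V \<and> vs ! (i + 2) \<in> V
      \<and> T (vs ! i) (vs ! (i + 1)) \<and> T (vs ! (i + 1)) (vs ! (i + 2)) \<and> T (vs ! (i + 2)) (vs ! i)
      \<and> col (vs ! i) (vs ! (i + 1)) = c ! ((p0 + i) mod 3)
      \<and> col (vs ! (i + 1)) (vs ! (i + 2)) = c ! ((p0 + i + 1) mod 3)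
      \<and> col (vs ! (i + 2)) (vs ! i) = c ! ((p0 + i + 2) mod 3)" if "i + 2 < length vs" for i
    using walk that by (auto simp: phased_walk_def phased_triangles_def cyclic_triangles_def mod_simps)
  show "set vs \<subseteq> V"
  proof
    fix v
    assume "v \<in> set vs"
    then obtain i where "i < length vs" "v = vs ! i"
      by (auto simp: in_set_conv_nth)
    have last: "vs ! (length vs - 3 + 1) \<in> V" "vs ! (length vs - 3 + 2) \<in> V"
      using window[of "length vs - 3"] \<open>3 \<le> length vs\<close> by simp_all
    consider "i + 2 < length vs" | "i = length vs - 3 + 1" | "i = length vs - 3 + 2"
      using \<open>i < length vs\<close> \<open>3 \<le> length vs\<close> by linarith
    then show "v \<in> V"
      using window[of i] last \<open>v = vs ! i\<close> by cases simp_all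
  qed
  show "T (vs ! j) (vs ! (j + 1)) \<and> col (vs ! j) (vs ! (j + 1)) = c ! ((p0 + j) mod 3)"
    if "j + 1 < length vs"
  proof (cases "j + 2 < length vs")
    case True
    then show ?thesis
      using window by blast
  next
    case False
    then have "j = (j - 1) + 1" "j - 1 + 2 < length vs"
      using that \<open>3 \<le> length vs\<close> by linarith+
    then show ?thesis
      using window[of "j - 1"] by (metis add.assoc one_add_one)
  qed
  show "T (vs ! (j + 2)) (vs ! j) \<and> col (vs ! (j + 2)) (vs ! j) = c ! ((p0 + j + 2) mod 3)"
    if "j + 2 < length vs"
    using window[OF that] by blast
qed

definition colour_periodic_path :: "'a set \<Rightarrow> ('a \<Rightarrow> 'a \<Rightarrow> bool) \<Rightarrow> ('a \<Rightarrow> 'a \<Rightarrow> 'c) \<Rightarrow> 'a list \<Rightarrow> bool" where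
  "colour_periodic_path V T col vs \<longleftrightarrow> distinct vs \<and> set vs \<subseteq> V \<and>
     (\<forall>j. j + 1 < length vs \<longrightarrow> T (vs ! j) (vs ! (j + 1))) \<and>
     (\<forall>j. j + 2 < length vs \<longrightarrow> T (vs ! (j + 2)) (vs ! j)) \<and>
     (\<forall>j. j + 4 < length vs \<longrightarrow> col (vs ! j) (vs ! (j + 1)) = col (vs ! (j + 3)) (vs ! (j + 4))) \<and>
     (\<forall>j. j + 5 < length vs \<longrightarrow> col (vs ! (j + 2)) (vs ! j) = col (vs ! (j + 5)) (vs ! (j + 3)))"

lemma colour_periodic_path_if_phased_walk:
  assumes walk: "phased_walk (phased_triangles V T col c) vs p0" and "3 \<le> length vs" and "distinct vs"
  shows "colour_periodic_path V T col vs"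
  unfolding colour_periodic_path_def
proof (intro conjI allI impI)
  note forward = phased_walk_in_phased_triangles(2)[OF walk \<open>3 \<le> length vs\<close>]
  note backward = phased_walk_in_phased_triangles(3)[OF walk \<open>3 \<le> length vs\<close>]
  show "distinct vs" "set vs \<subseteq> V"
    using \<open>distinct vs\<close> phased_walk_in_phased_triangles(1)[OF walk \<open>3 \<le> length vs\<close>] by simp_all
  show "T (vs ! j) (vs ! (j + 1))" if "j + 1 < length vs" for j
    using forward[OF that] by blast
  show "T (vs ! (j + 2)) (vs ! j)" if "j + 2 < length vs" for j
    using backward[OF that] by blast
  show "col (vs ! j) (vs ! (j + 1)) = col (vs ! (j + 3)) (vs ! (j + 4))" if "j + 4 < length vs" for j
  proof -
    have "(p0 + (j + 3)) mod 3 = (p0 + j) mod 3"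
      by presburger
    then show ?thesis
      using that forward[of j] forward[of "j + 3"] by (simp add: algebra_simps)
  qed
  show "col (vs ! (j + 2)) (vs ! j) = col (vs ! (j + 5)) (vs ! (j + 3))" if "j + 5 < length vs" for j
  proof -
    have "(p0 + (j + 3) + 2) mod 3 = (p0 + j + 2) mod 3"
      by presburger
    then show ?thesis
      using that backward[of j] backward[of "j + 3"] by (simp add: algebra_simps)
  qed
qed

lemma card_forward_colours_le_3:
  assumes "colour_periodic_path V T col vs"
  shows "card {col (vs ! j) (vs ! (j + 1)) | j. j + 1 < length vs} \<le> 3"
proof -
  define f where "f j = col (vs ! j) (vs ! (j + 1))" for j
  have period: "f j = f (j mod 3)" if "j + 1 < length vs" for j
    using that
  proof (induction j rule: less_induct)
    case (less j)
    show ?case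
    proof (cases "j < 3")
      case False
      then have "f (j - 3) = f j" and "(j - 3) mod 3 = j mod 3"
        using assms less.prems unfolding colour_periodic_path_def f_def
        by (auto simp: mod_if)
      then show ?thesis
        using less.IH[of "j - 3"] False less.prems by simp
    qed simp
  qed
  then have "{col (vs ! j) (vs ! (j + 1)) | j. j + 1 < length vs} \<subseteq> f ` {..<3}"
  proof clarify
    fix j
    assume "j + 1 < length vs"
    then have "col (vs ! j) (vs ! (j + 1)) = f (j mod 3)"
      using period[OF \<open>j + 1 < length vs\<close>] by (simp only: f_def)
    then show "col (vs ! j) (vs ! (j + 1)) \<in> f ` {..<3}"
      by simp
  qed
  then have "card {col (vs ! j) (vs ! (j + 1)) | j. j + 1 < length vs} \<le> card (f ` {..<3})"
    by (rule card_mono[OF finite_imageI[OF finite_lessThan]])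
  also have "\<dots> \<le> 3"
    using card_image_le[of "{..<3::nat}" f] by simp
  finally show ?thesis .
qed

lemma long_phased_walk_in_phased_triangles:
  assumes tour: "tournament V T" and "3 \<le> k"
    and many: "9 * k * (card V)\<^sup>2 < card (phased_triangles V T col c)"
  shows "\<exists>vs p0. length vs = k \<and> distinct vs \<and> phased_walk (phased_triangles V T col c) vs p0"
proof -
  let ?H = "phased_triangles V T col c"
  have "finite V"
    using tour by (rule tournament_finite)
  then have "3 * k * card (front ` ?H) \<le> 3 * k * (3 * (card V)\<^sup>2)"
    by (intro mult_le_mono2 card_front_phased_triangles_le)
  then have "3 * k * card (front ` ?H) < card ?H"
    using many by linarith
  then have "\<exists>G\<subseteq>?H. G \<noteq> {} \<and> (\<forall>t\<in>G. rotate_triangle t \<in> G)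
      \<and> (\<forall>(x, y, z, p)\<in>G. k \<le> card (link G x y p))"
    using finite_phased_triangles[OF \<open>finite V\<close>] rotate_phased_triangles phase_phased_triangles
    by (intro rotation_closed_subset_with_large_links) auto
  then obtain G where "G \<subseteq> ?H" "G \<noteq> {}" "\<forall>t\<in>G. rotate_triangle t \<in> G"
    "\<forall>(x, y, z, p)\<in>G. k \<le> card (link G x y p)"
    by blast
  moreover have "\<forall>(x, y, z, p)\<in>G. distinct [x, y, z]"
  proof clarify
    fix x y z p
    assume "(x, y, z, p) \<in> G"
    then show "distinct [x, y, z]"
      using \<open>G \<subseteq> ?H\<close> distinct_phased_triangles[OF tour] by blast
  qed
  ultimately obtain vs p0 where "length vs = k" "distinct vs" "phased_walk G vs p0"
    using long_phased_walk_if_large_links[of G k] \<open>3 \<le> k\<close> by blast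
  then show ?thesis
    using phased_walk_mono[OF _ \<open>G \<subseteq> ?H\<close>] by blast
qed

text \<open>With \<open>\<beta> = \<delta>\<^sup>2 N / (216 q\<^sup>3)\<close> and a walk length \<open>k < 3 \<beta>\<close>, the \<open>> 3 \<delta>\<^sup>2 N\<^sup>3 / 16\<close> cyclic
  triangles give, for the most popular colour pattern, more than \<open>9 k N\<^sup>2\<close> phased triangles.\<close>

lemma far_tournament_long_colour_periodic_path:
  fixes col :: "'a \<Rightarrow> 'a \<Rightarrow> nat"
  assumes "0 < \<delta>" and "0 < q" and "0 < card V" and tour: "tournament V T"
    and far: "delta_far_transitive \<delta> V T" and col: "\<forall>x y. T x y \<longrightarrow> col x y < q"
  shows "\<exists>vs. colour_periodic_path V T col vs
    \<and> \<delta>\<^sup>2 * real (card V) / (216 * real q ^ 3) \<le> real (length vs)"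
proof (cases "\<delta>\<^sup>2 * real (card V) / (216 * real q ^ 3) \<le> 1")
  case True
  obtain v where "v \<in> V"
    using \<open>0 < card V\<close> by (auto simp: card_gt_0_iff)
  then have "colour_periodic_path V T col [v]"
    by (simp add: colour_periodic_path_def)
  then show ?thesis
    using True by (intro exI[of _ "[v]"]) simp
next
  case False
  define \<beta> where "\<beta> = \<delta>\<^sup>2 * real (card V) / (216 * real q ^ 3)"
  define k where "k = max 3 (nat \<lceil>\<beta>\<rceil>)"
  have "1 < \<beta>"
    using False by (simp add: \<beta>_def)
  then have "\<beta> \<le> real k" and "real k < 3 * \<beta>" and "3 \<le> k"
    unfolding k_def by (auto simp: max_def) linarith+
  have "finite V"
    using tour by (rule tournament_finite)
  obtain c where popular: "card (cyclic_triangles V T) \<le> q ^ 3 * card (phased_triangles V T col c)"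
    using exists_colour_pattern[OF \<open>finite V\<close> \<open>0 < q\<close> col] by blast
  have "real q ^ 3 * (9 * real k * real (card V) ^ 2) < real q ^ 3 * (27 * \<beta> * real (card V) ^ 2)"
    using \<open>real k < 3 * \<beta>\<close> \<open>0 < q\<close> \<open>0 < card V\<close> by simp
  also have "\<dots> = \<delta>\<^sup>2 * real (card V) ^ 3 / 8"
    using \<open>0 < q\<close> by (simp add: \<beta>_def field_simps power2_eq_square power3_eq_cube)
  also have "\<dots> < real (card (cyclic_triangles V T))"
    using far_from_transitive_many_cyclic_triangles[OF tour far \<open>0 < \<delta>\<close> \<open>0 < card V\<close>]
      \<open>0 < \<delta>\<close> \<open>0 < card V\<close> by simp
  also have "\<dots> \<le> real q ^ 3 * real (card (phased_triangles V T col c))"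
    using popular by (metis of_nat_le_iff of_nat_mult of_nat_power)
  finally have "real (9 * k * (card V)\<^sup>2) < real (card (phased_triangles V T col c))"
    using \<open>0 < q\<close> by simp
  then have "9 * k * (card V)\<^sup>2 < card (phased_triangles V T col c)"
    by (simp only: of_nat_less_iff)
  then obtain vs p0 where "length vs = k" "distinct vs"
    and walk: "phased_walk (phased_triangles V T col c) vs p0"
    using long_phased_walk_in_phased_triangles[OF tour \<open>3 \<le> k\<close>] by blast
  then show ?thesis
    using colour_periodic_path_if_phased_walk[OF walk] \<open>3 \<le> k\<close> \<open>\<beta> \<le> real k\<close>
    unfolding \<beta>_def by auto
qed

theorem theorem1p7:
  "\<exists>c::real. c > 0 \<and>
    (\<forall>(\<delta>::real) (q::nat) (V::nat set) (T::nat \<Rightarrow> nat \<Rightarrow> bool) (col::nat \<Rightarrow> nat \<Rightarrow> nat).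
       \<delta> > 0 \<longrightarrow> q > 0 \<longrightarrow> card V > 0 \<longrightarrow> tournament V T \<longrightarrow>
       delta_far_transitive \<delta> V T \<longrightarrow>
       (\<forall>x y. T x y \<longrightarrow> col x y < q) \<longrightarrow>
       (\<exists>vs. directed_path V T vs \<and>
              real (length vs) \<ge> c * \<delta>^2 * real (card V) / real q ^ 3 \<and>
              card {col (vs ! j) (vs ! (j + 1)) | j. j + 1 < length vs} \<le> 3) \<and>
       (\<exists>vs. distinct vs \<and> set vs \<subseteq> V \<and>
              real (length vs) \<ge> c * \<delta>^2 * real (card V) / real q ^ 3 \<and>
              (\<forall>j. j + 1 < length vs \<longrightarrow> T (vs ! j) (vs ! (j + 1))) \<and>
              (\<forall>j. j + 2 < length vs \<longrightarrow> T (vs ! (j + 2)) (vs ! j)) \<and>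
              (\<forall>j. j + 4 < length vs \<longrightarrow>
                   col (vs ! j) (vs ! (j + 1)) = col (vs ! (j + 3)) (vs ! (j + 4))) \<and>
              (\<forall>j. j + 5 < length vs \<longrightarrow>
                   col (vs ! (j + 2)) (vs ! j) = col (vs ! (j + 5)) (vs ! (j + 3)))))"
proof (rule exI[of _ "1 / 216"], rule conjI, simp, intro allI impI, goal_cases)
  case (1 \<delta> q V T col)
  then obtain vs where path: "colour_periodic_path V T col vs"
    and long: "\<delta>\<^sup>2 * real (card V) / (216 * real q ^ 3) \<le> real (length vs)"
    using far_tournament_long_colour_periodic_path by blast
  have "1 / 216 * \<delta>^2 * real (card V) / real q ^ 3 \<le> real (length vs)"
    using long by simp
  moreover have "directed_path V T vs"
    using path by (simp add: colour_periodic_path_def directed_path_def)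
  ultimately show ?case
    using path card_forward_colours_le_3[OF path] unfolding colour_periodic_path_def by blast
qed

end
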